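(* Let $\Gamma$ be an oriented path in $\mathbb C$ which is an interval of a straight line, let $f$ be a polynomial of degree at most $m\in\mathbb Z_+$, and let $g:\Gamma\to\mathbb C$ be a continuous map taking values in a line in $\mathbb C$ passing through $0$, such that $f(z)+g(z)\ne0$ for every $z\in\Gamma$. Then $w(f+g,\Gamma)<\frac{m+1}{2}$.
   Context: An oriented path $\Gamma$ with source $s(\Gamma)$ and end $e(\Gamma)$ is a set $\Gamma=\phi([a,b])$ for a continuous $\phi:[a,b]\to\mathbb C$ with $\phi(a)=s(\Gamma)$, $\phi(b)=e(\Gamma)$, $\phi$ injective on $(a,b)$. For continuous $F:\Gamma\to\mathbb C\setminus\{0\}$, choose such a parametrization $\phi$ and a continuous $\psi:[a,b]\to\mathbb R$ with $F(\phi(t))/|F(\phi(t))|=e^{i\psi(t)}$; the winding number of $F$ along $\Gamma$ is $w(F,\Gamma)=\frac{\psi(b)-\psi(a)}{2\pi}$ (independent of choices). *)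

theory Defs
  imports "HOL-Analysis.Analysis" "HOL-Computational_Algebra.Polynomial"
begin

definition seg_winding :: "(complex \<Rightarrow> complex) \<Rightarrow> complex \<Rightarrow> complex \<Rightarrow> real" where
  "seg_winding F s e =
     (THE w. \<exists>\<psi>::real \<Rightarrow> real. continuous_on {0..1} \<psi> \<and>
        (\<forall>t\<in>{0..1}. F (linepath s e t) / complex_of_real (norm (F (linepath s e t))) = cis (\<psi> t)) \<and>
        w = (\<psi> 1 - \<psi> 0) / (2 * pi))"

end

theory Submission
  imports Defs
begin

text \<open>Choose a continuous argument \<open>\<psi>\<close> of \<open>f + g\<close> along the segment and rotate so that the line
  carrying \<open>g\<close> becomes the real axis: with \<open>\<theta> = \<psi> - Arg c\<close>, \<open>sin \<theta>\<close> vanishes exactly where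
  \<open>Im ((f + g) / c) = Im (f / c)\<close> does, i.e. at the zeros of a real polynomial of degree at most \<open>m\<close>
  in the parameter of the segment (or everywhere). Between consecutive zeros of \<open>sin \<theta>\<close> the value
  \<open>f + g\<close> stays in a closed half-plane bounded by the line, so \<open>\<theta>\<close> moves by at most \<open>\<pi>\<close>, and by
  less than \<open>\<pi>\<close> on the first piece unless it starts on the line. Hence the total change of \<open>\<theta>\<close> is
  less than \<open>(m + 1) \<pi>\<close>.\<close>

lemma sin_neg_on_lower_halfturn:
  fixes k :: int
  assumes "2 * pi * k + pi < x" "x < 2 * pi * k + 2 * pi"
  shows "sin x < 0"
proof -
  have "sin (x - 2 * pi * k) < 0"
    using assms by (intro sin_lt_zero) auto
  then show ?thesis by (simp add: sin_diff)
qed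

lemma sin_nonneg_imp_upper_halfturn:
  assumes "0 \<le> sin x"
  obtains k :: int where "2 * pi * k \<le> x" "x \<le> 2 * pi * k + pi"
proof -
  define k where "k = \<lfloor>x / (2 * pi)\<rfloor>"
  have "k \<le> x / (2 * pi)" "x / (2 * pi) < k + 1"
    unfolding k_def by linarith+
  then have "2 * pi * k \<le> x" "x < 2 * pi * k + 2 * pi"
    by (simp_all add: field_simps)
  with sin_neg_on_lower_halfturn[of k x] assms show thesis
    using that by force
qed

lemma connected_sin_nonneg_subset_halfturn:
  fixes S :: "real set" and k :: int
  assumes "connected S" "x0 \<in> S" "2 * pi * k \<le> x0" "x0 \<le> 2 * pi * k + pi"
    and "\<forall>x\<in>S. 0 \<le> sin x"
  shows "S \<subseteq> {2 * pi * k .. 2 * pi * k + pi}"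
proof
  fix y assume y: "y \<in> S"
  show "y \<in> {2 * pi * k .. 2 * pi * k + pi}"
  proof (rule ccontr)
    assume "y \<notin> {2 * pi * k .. 2 * pi * k + pi}"
    then consider "y < 2 * pi * k" | "2 * pi * k + pi < y" by force
    then obtain v where "v \<in> S" "sin v < 0"
    proof cases
      case 1
      define v where "v = max y (2 * pi * k - pi / 2)"
      have v: "2 * pi * (k - 1) + pi < v" "v < 2 * pi * (k - 1) + 2 * pi"
        using 1 pi_gt_zero by (auto simp: v_def algebra_simps less_max_iff_disj)
      have "{y..x0} \<subseteq> S" using connected_contains_Icc assms y by blast
      moreover have "v \<in> {y..x0}" using v assms(3) by (auto simp: v_def algebra_simps)
      ultimately show thesis using that sin_neg_on_lower_halfturn[OF v] by blast
    next
      case 2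
      define v where "v = min y (2 * pi * k + 3 * pi / 2)"
      have v: "2 * pi * k + pi < v" "v < 2 * pi * k + 2 * pi"
        using 2 pi_gt_zero by (auto simp: v_def min_less_iff_disj)
      have "{x0..y} \<subseteq> S" using connected_contains_Icc assms y by blast
      moreover have "v \<in> {x0..y}" using v assms(4) by (auto simp: v_def)
      ultimately show thesis using that sin_neg_on_lower_halfturn[OF v] by blast
    qed
    then show False using assms(5) by force
  qed
qed

lemma sin_nonneg_lift_variation:
  fixes \<theta> :: "real \<Rightarrow> real"
  assumes "a \<le> b" "continuous_on {a..b} \<theta>" "\<forall>t\<in>{a..b}. 0 \<le> sin (\<theta> t)"
  shows "\<bar>\<theta> b - \<theta> a\<bar> \<le> pi" and "sin (\<theta> a) \<noteq> 0 \<Longrightarrow> \<bar>\<theta> b - \<theta> a\<bar> < pi"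
proof -
  obtain k :: int where k: "2 * pi * k \<le> \<theta> a" "\<theta> a \<le> 2 * pi * k + pi"
    using sin_nonneg_imp_upper_halfturn assms(1,3) by force
  have "\<theta> ` {a..b} \<subseteq> {2 * pi * k .. 2 * pi * k + pi}"
    using assms(1,3) k
    by (intro connected_sin_nonneg_subset_halfturn connected_continuous_image assms(2)) auto
  then have b: "\<theta> b \<in> {2 * pi * k .. 2 * pi * k + pi}" using assms(1) by (auto simp: image_subset_iff)
  then show "\<bar>\<theta> b - \<theta> a\<bar> \<le> pi" using k unfolding abs_le_iff atLeastAtMost_iff by linarith
  show "\<bar>\<theta> b - \<theta> a\<bar> < pi" if "sin (\<theta> a) \<noteq> 0"
  proof -
    have "sin (2 * pi * k) = 0" "sin (2 * pi * k + pi) = 0" by simp_all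
    with that have "\<theta> a \<noteq> 2 * pi * k" "\<theta> a \<noteq> 2 * pi * k + pi" by metis+
    then show ?thesis using b k unfolding abs_less_iff atLeastAtMost_iff by linarith
  qed
qed

lemma sin_nonzero_lift_variation:
  fixes \<theta> :: "real \<Rightarrow> real"
  assumes ab: "a \<le> b" and cont: "continuous_on {a..b} \<theta>"
    and nz: "\<forall>t\<in>{a<..<b}. sin (\<theta> t) \<noteq> 0"
  shows "\<bar>\<theta> b - \<theta> a\<bar> \<le> pi" and "sin (\<theta> a) \<noteq> 0 \<Longrightarrow> \<bar>\<theta> b - \<theta> a\<bar> < pi"
proof -
  have "(\<forall>t\<in>{a..b}. 0 \<le> sin (\<theta> t)) \<or> (\<forall>t\<in>{a..b}. 0 \<le> sin (- \<theta> t))"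
  proof (rule ccontr)
    assume "\<not> ?thesis"
    then obtain x y where xy: "x \<in> {a..b}" "y \<in> {a..b}" "sin (\<theta> x) < 0" "0 < sin (\<theta> y)"
      by (auto simp: not_le)
    have seg: "closed_segment x y \<subseteq> {a..b}"
      using xy by (simp add: closed_segment_subset)
    have "continuous_on (closed_segment x y) (\<lambda>t. sin (\<theta> t))"
      by (intro continuous_intros continuous_on_subset[OF cont seg])
    moreover have "0 \<in> closed_segment (sin (\<theta> x)) (sin (\<theta> y))"
      using xy by (simp add: closed_segment_eq_real_ivl)
    ultimately obtain z where z: "z \<in> closed_segment x y" "sin (\<theta> z) = 0"
      by (metis IVT'_closed_segment_real)
    have "z \<in> open_segment x y" using z xy by (auto simp: open_segment_def)
    then have "z \<in> {a<..<b}" using xy by (auto simp: open_segment_eq_real_ivl split: if_splits)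
    with nz z show False by blast
  qed
  then have "\<bar>\<theta> b - \<theta> a\<bar> \<le> pi \<and> (sin (\<theta> a) \<noteq> 0 \<longrightarrow> \<bar>\<theta> b - \<theta> a\<bar> < pi)"
  proof
    assume "\<forall>t\<in>{a..b}. 0 \<le> sin (\<theta> t)"
    from sin_nonneg_lift_variation[OF ab cont this] show ?thesis by blast
  next
    assume "\<forall>t\<in>{a..b}. 0 \<le> sin (- \<theta> t)"
    from sin_nonneg_lift_variation[OF ab continuous_on_minus[OF cont] this] show ?thesis
      by (simp add: abs_minus_commute)
  qed
  then show "\<bar>\<theta> b - \<theta> a\<bar> \<le> pi" and "sin (\<theta> a) \<noteq> 0 \<Longrightarrow> \<bar>\<theta> b - \<theta> a\<bar> < pi"
    by blast+
qed

lemma sin_lift_variation_zero_count: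
  fixes \<theta> :: "real \<Rightarrow> real"
  assumes "a \<le> b" "continuous_on {a..b} \<theta>" "finite {t\<in>{a<..b}. sin (\<theta> t) = 0}"
  shows "\<bar>\<theta> b - \<theta> a\<bar> \<le> (card {t\<in>{a<..b}. sin (\<theta> t) = 0} + 1) * pi \<and>
    (sin (\<theta> a) \<noteq> 0 \<longrightarrow> \<bar>\<theta> b - \<theta> a\<bar> < (card {t\<in>{a<..b}. sin (\<theta> t) = 0} + 1) * pi)"
  using assms
proof (induction "card {t\<in>{a<..b}. sin (\<theta> t) = 0}" arbitrary: a rule: less_induct)
  case less
  define Z where "Z = {t\<in>{a<..b}. sin (\<theta> t) = 0}"
  show ?case
  proof (cases "Z = {}")
    case True
    then have "\<forall>t\<in>{a<..<b}. sin (\<theta> t) \<noteq> 0" by (auto simp: Z_def)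
    moreover have "card Z = 0" using True by simp
    ultimately show ?thesis
      using sin_nonzero_lift_variation[OF less.prems(1,2)] by (simp add: Z_def)
  next
    case False
    define t1 where "t1 = Min Z"
    have "finite Z" using less.prems(3) by (simp add: Z_def)
    then have "t1 \<in> Z" and t1_least: "\<And>t. t \<in> Z \<Longrightarrow> t1 \<le> t"
      using False by (simp_all add: t1_def)
    then have t1: "a < t1" "t1 \<le> b" "sin (\<theta> t1) = 0" by (simp_all add: Z_def)
    have "\<forall>t\<in>{a<..<t1}. sin (\<theta> t) \<noteq> 0"
      using t1 t1_least by (force simp: Z_def)
    moreover have "continuous_on {a..t1} \<theta>"
      using t1 by (intro continuous_on_subset[OF less.prems(2)]) auto
    ultimately have first: "\<bar>\<theta> t1 - \<theta> a\<bar> \<le> pi" "sin (\<theta> a) \<noteq> 0 \<Longrightarrow> \<bar>\<theta> t1 - \<theta> a\<bar> < pi"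
      using sin_nonzero_lift_variation[of a t1 \<theta>] t1 by simp_all
    have rest: "{t\<in>{t1<..b}. sin (\<theta> t) = 0} = Z - {t1}"
      using t1 t1_least by (force simp: Z_def)
    have "card (Z - {t1}) < card Z"
      using \<open>finite Z\<close> \<open>t1 \<in> Z\<close> by (rule card_Diff1_less)
    moreover have "continuous_on {t1..b} \<theta>"
      using t1 by (intro continuous_on_subset[OF less.prems(2)]) auto
    ultimately have "\<bar>\<theta> b - \<theta> t1\<bar> \<le> (card (Z - {t1}) + 1) * pi"
      using less.hyps[of t1] t1 rest \<open>finite Z\<close> by (simp add: Z_def)
    also have "\<dots> = card Z * pi"
      using \<open>finite Z\<close> \<open>t1 \<in> Z\<close> False by (simp add: card_Diff_singleton card_gt_0_iff Suc_diff_1)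
    finally have "\<bar>\<theta> b - \<theta> t1\<bar> \<le> card Z * pi" .
    with first show ?thesis by (auto simp: Z_def algebra_simps)
  qed
qed

lemma sin_lift_variation_poly_zeros:
  fixes \<theta> :: "real \<Rightarrow> real" and Q :: "real poly"
  assumes ab: "a \<le> b" and cont: "continuous_on {a..b} \<theta>"
    and zeros: "\<forall>t\<in>{a..b}. sin (\<theta> t) = 0 \<longleftrightarrow> poly Q t = 0"
    and "degree Q \<le> m" "1 \<le> m"
  shows "\<bar>\<theta> b - \<theta> a\<bar> < (real m + 1) * pi"
proof (cases "Q = 0")
  case True
  then have "\<bar>\<theta> b - \<theta> a\<bar> \<le> pi"
    using zeros by (intro sin_nonneg_lift_variation(1)[OF ab cont]) simp
  moreover have "0 < m * pi" using \<open>1 \<le> m\<close> by simp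
  ultimately show ?thesis by (simp add: distrib_right)
next
  case False
  define Z where "Z = {t\<in>{a<..b}. sin (\<theta> t) = 0}"
  have roots: "Z \<subseteq> {t. poly Q t = 0}" using zeros by (auto simp: Z_def)
  have "finite {t. poly Q t = 0}" using False by (rule poly_roots_finite)
  then have "finite Z" by (rule finite_subset[OF roots])
  have "card {t. poly Q t = 0} \<le> m"
    using card_poly_roots_bound[OF False] \<open>degree Q \<le> m\<close> by linarith
  note var = sin_lift_variation_zero_count[OF ab cont, folded Z_def, OF \<open>finite Z\<close>]
  show ?thesis
  proof (cases "sin (\<theta> a) = 0")
    case True
    then have "insert a Z \<subseteq> {t. poly Q t = 0}" using roots zeros ab by auto
    then have "card (insert a Z) \<le> card {t. poly Q t = 0}"
      by (rule card_mono[OF \<open>finite {t. poly Q t = 0}\<close>])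
    moreover have "card (insert a Z) = card Z + 1"
      using \<open>finite Z\<close> by (simp add: Z_def)
    ultimately have "card Z + 1 \<le> card {t. poly Q t = 0}" by simp
    then have "card Z + 1 \<le> m" using \<open>card {t. poly Q t = 0} \<le> m\<close> by linarith
    have "\<bar>\<theta> b - \<theta> a\<bar> \<le> (card Z + 1) * pi" using var by blast
    also have "\<dots> \<le> m * pi"
      using \<open>card Z + 1 \<le> m\<close> by (simp del: of_nat_add add: of_nat_add[symmetric])
    also have "\<dots> < (real m + 1) * pi" by (simp add: distrib_right)
    finally show ?thesis .
  next
    case False
    have "card Z \<le> m"
      using card_mono[OF \<open>finite {t. poly Q t = 0}\<close> roots] \<open>card {t. poly Q t = 0} \<le> m\<close> by linarith
    then have "(card Z + 1) * pi \<le> (real m + 1) * pi" by simp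
    moreover have "\<bar>\<theta> b - \<theta> a\<bar> < (card Z + 1) * pi" using var False by blast
    ultimately show ?thesis by linarith
  qed
qed

lemma continuous_cis_lift_exists:
  fixes u :: "real \<Rightarrow> complex"
  assumes "continuous_on {a..b} u" "\<forall>t\<in>{a..b}. u t \<noteq> 0"
  obtains \<psi> where "continuous_on {a..b} \<psi>"
    "\<forall>t\<in>{a..b}. u t / of_real (norm (u t)) = cis (\<psi> t)"
proof -
  obtain G where G: "continuous_on {a..b} G" "\<And>t. t \<in> {a..b} \<Longrightarrow> u t = exp (G t)"
    using continuous_logarithm_on_contractible[OF assms(1) convex_imp_contractible] assms(2)
    by (metis convex_real_interval(5))
  have "continuous_on {a..b} (\<lambda>t. Im (G t))" by (intro continuous_intros G(1))
  moreover have "u t / of_real (norm (u t)) = cis (Im (G t))" if "t \<in> {a..b}" for t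
    using G(2)[OF that] by (simp add: exp_eq_polar[of "G t"] norm_mult)
  ultimately show thesis using that by blast
qed

lemma cis_lift_variation_unique:
  fixes \<psi>1 \<psi>2 :: "real \<Rightarrow> real"
  assumes "a \<le> b" "continuous_on {a..b} \<psi>1" "continuous_on {a..b} \<psi>2"
    and "\<forall>t\<in>{a..b}. cis (\<psi>1 t) = cis (\<psi>2 t)"
  shows "\<psi>1 b - \<psi>1 a = \<psi>2 b - \<psi>2 a"
proof -
  define h where "h t = (\<psi>1 t - \<psi>2 t) / (2 * pi)" for t
  have h_int: "h t \<in> \<int>" if "t \<in> {a..b}" for t
  proof -
    have "cis (\<psi>1 t - \<psi>2 t) = 1" using assms(4) that by (simp add: cis_divide[symmetric])
    then have "cos (\<psi>1 t - \<psi>2 t) = 1" by (simp add: complex_eq_iff)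
    then obtain n :: int where "\<psi>1 t - \<psi>2 t = n * 2 * pi" by (auto simp: cos_one_2pi_int)
    then show ?thesis by (simp add: h_def)
  qed
  have "continuous_on {a..b} h" unfolding h_def by (intro continuous_intros assms(2,3)) simp
  then have "h constant_on {a..b}"
  proof (rule continuous_discrete_range_constant[OF connected_Icc])
    fix x assume "x \<in> {a..b}"
    then show "\<exists>e>0. \<forall>y. y \<in> {a..b} \<and> h y \<noteq> h x \<longrightarrow> e \<le> norm (h y - h x)"
      using h_int by (intro exI[of _ 1]) (auto intro!: Ints_nonzero_abs_ge1 Ints_diff)
  qed
  then have "h b = h a" using assms(1) by (auto simp: constant_on_def)
  then show ?thesis by (simp add: h_def divide_simps)
qed

lemma seg_winding_eqI:
  assumes "continuous_on {0..1} \<psi>"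
    and "\<forall>t\<in>{0..1}. F (linepath s e t) / of_real (norm (F (linepath s e t))) = cis (\<psi> t)"
  shows "seg_winding F s e = (\<psi> 1 - \<psi> 0) / (2 * pi)"
  unfolding seg_winding_def
proof (rule the_equality)
  fix w assume "\<exists>\<psi>'. continuous_on {0..1} \<psi>' \<and>
    (\<forall>t\<in>{0..1}. F (linepath s e t) / of_real (norm (F (linepath s e t))) = cis (\<psi>' t)) \<and>
    w = (\<psi>' 1 - \<psi>' 0) / (2 * pi)"
  then obtain \<psi>' where "continuous_on {0..1} \<psi>'"
    "\<forall>t\<in>{0..1}. F (linepath s e t) / of_real (norm (F (linepath s e t))) = cis (\<psi>' t)"
    "w = (\<psi>' 1 - \<psi>' 0) / (2 * pi)"
    by blast
  with assms cis_lift_variation_unique[of 0 1 \<psi>' \<psi>] show "w = (\<psi> 1 - \<psi> 0) / (2 * pi)"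
    by simp
qed (use assms in blast)

lemma seg_winding_obtain_lift:
  assumes "continuous_on (closed_segment s e) F" "\<forall>z\<in>closed_segment s e. F z \<noteq> 0"
  obtains \<psi> where "continuous_on {0..1} \<psi>"
    "\<forall>t\<in>{0..1}. F (linepath s e t) / of_real (norm (F (linepath s e t))) = cis (\<psi> t)"
    "seg_winding F s e = (\<psi> 1 - \<psi> 0) / (2 * pi)"
proof -
  have "continuous_on {0..1} (\<lambda>t. F (linepath s e t))"
    by (intro continuous_on_compose2[OF assms(1)] continuous_intros) (auto intro: linepath_in_path)
  moreover have "\<forall>t\<in>{0..1}. F (linepath s e t) \<noteq> 0"
    using assms(2) linepath_in_path by blast
  ultimately obtain \<psi> where "continuous_on {0..1} \<psi>"
    "\<forall>t\<in>{0..1}. F (linepath s e t) / of_real (norm (F (linepath s e t))) = cis (\<psi> t)"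
    by (rule continuous_cis_lift_exists)
  with seg_winding_eqI that show thesis by blast
qed

lemma sin_diff_Arg_eq_0_iff:
  assumes "z \<noteq> 0" "c \<noteq> 0" "z / of_real (norm z) = cis \<psi>"
  shows "sin (\<psi> - Arg c) = 0 \<longleftrightarrow> Im (z / c) = 0"
proof -
  have rotated: "cis (\<psi> - Arg c) = (norm c / norm z) *\<^sub>R (z / c)"
    using assms by (simp add: cis_divide[symmetric] cis_Arg sgn_div_norm scaleR_conv_of_real field_simps)
  have "sin (\<psi> - Arg c) = norm c / norm z * Im (z / c)"
    using arg_cong[OF rotated, of Im] by (simp only: cis.sel scaleR_complex.sel)
  then show ?thesis using assms(1,2) by simp
qed

lemma Im_poly_of_real: "Im (poly p (of_real t)) = poly (map_poly Im p) t"
  by (induction p) (simp_all add: map_poly_pCons)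

lemma Im_poly_linepath_div:
  "Im (poly f (linepath s e t) / c) = poly (map_poly Im (smult (inverse c) (f \<circ>\<^sub>p [:s, e - s:]))) t"
proof -
  have "poly f (linepath s e t) = poly (f \<circ>\<^sub>p [:s, e - s:]) (of_real t)"
    by (simp add: poly_pcompose linepath_def scaleR_conv_of_real algebra_simps)
  then have "poly f (linepath s e t) / c = poly (smult (inverse c) (f \<circ>\<^sub>p [:s, e - s:])) (of_real t)"
    by (simp add: divide_inverse mult.commute)
  then show ?thesis by (simp only: Im_poly_of_real)
qed

lemma degree_Im_poly_linepath_div_le:
  "degree (map_poly Im (smult (inverse c) (f \<circ>\<^sub>p [:s, e - s:]))) \<le> degree f"
proof -
  have "degree (map_poly Im (smult (inverse c) (f \<circ>\<^sub>p [:s, e - s:]))) \<le> degree (f \<circ>\<^sub>p [:s, e - s:])"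
    using map_poly_degree_leq degree_smult_le order_trans by blast
  also have "\<dots> \<le> degree f"
    using degree_pcompose_le[of f "[:s, e - s:]"] by (cases "e = s") auto
  finally show ?thesis .
qed

theorem lemma5p1:
  fixes s e :: complex and f :: "complex poly" and g :: "complex \<Rightarrow> complex" and m :: nat
  assumes "s \<noteq> e"
    and "m \<ge> 1"
    and "degree f \<le> m"
    and "continuous_on (closed_segment s e) g"
    and "\<exists>c::complex. c \<noteq> 0 \<and> (\<forall>z\<in>closed_segment s e. \<exists>r::real. g z = of_real r * c)"
    and "\<forall>z\<in>closed_segment s e. poly f z + g z \<noteq> 0"
  shows "seg_winding (\<lambda>z. poly f z + g z) s e < (real m + 1) / 2"
proof -
  obtain c where "c \<noteq> 0" and g_line: "\<forall>z\<in>closed_segment s e. \<exists>r::real. g z = of_real r * c"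
    using assms(5) by blast
  have "continuous_on (closed_segment s e) (\<lambda>z. poly f z + g z)"
    by (intro continuous_intros assms(4))
  then obtain \<psi> where \<psi>: "continuous_on {0..1} \<psi>"
    "\<forall>t\<in>{0..1}. (poly f (linepath s e t) + g (linepath s e t)) /
       of_real (norm (poly f (linepath s e t) + g (linepath s e t))) = cis (\<psi> t)"
    and winding: "seg_winding (\<lambda>z. poly f z + g z) s e = (\<psi> 1 - \<psi> 0) / (2 * pi)"
    using assms(6) by (rule seg_winding_obtain_lift)
  define Q where "Q = map_poly Im (smult (inverse c) (f \<circ>\<^sub>p [:s, e - s:]))"
  have "sin (\<psi> t - Arg c) = 0 \<longleftrightarrow> poly Q t = 0" if t: "t \<in> {0..1}" for t
  proof -
    obtain r :: real where "g (linepath s e t) = of_real r * c"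
      using g_line linepath_in_path[OF t] by blast
    then have "Im ((poly f (linepath s e t) + g (linepath s e t)) / c) = poly Q t"
      using \<open>c \<noteq> 0\<close> by (simp add: Q_def add_divide_distrib Im_poly_linepath_div)
    moreover have "poly f (linepath s e t) + g (linepath s e t) \<noteq> 0"
      using assms(6) linepath_in_path[OF t] by blast
    ultimately show ?thesis
      using sin_diff_Arg_eq_0_iff[OF _ \<open>c \<noteq> 0\<close> \<psi>(2)[rule_format, OF t]] by simp
  qed
  moreover have "degree Q \<le> m"
    using degree_Im_poly_linepath_div_le assms(3) unfolding Q_def by (rule order_trans)
  ultimately have "\<bar>(\<psi> 1 - Arg c) - (\<psi> 0 - Arg c)\<bar> < (real m + 1) * pi"
    using \<psi>(1) assms(2)
    by (intro sin_lift_variation_poly_zeros[of 0 1 "\<lambda>t. \<psi> t - Arg c"]) (auto intro: continuous_intros)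
  then show ?thesis
    unfolding winding by (simp add: field_simps)
qed

end
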